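(* Let $(R,\mathfrak{m})$ be a Noetherian local ring and let $J\subseteq I$ be two ideals of $R$. Let $x_1,\ldots,x_s$ be a minimal generating set of $J$. Write $J_0=0$ and $J_i=(x_1,\ldots,x_i)$ for $i=1,\ldots,s$. Let $n\geq 2$. Then the following are equivalent: (i) $H_1(x_1t,\ldots,x_it;\mathbf{R}(I))_n=0$ for all $i=1,\ldots,s$; (ii) $\big((J_{i-1}I^{n-1}:x_i)\cap I^{n-1}\big)/J_{i-1}I^{n-2}=0$ for all $i=1,\ldots,s$. Suppose in addition that $x_1,\ldots,x_s$ is an $R$-sequence and that $x_1^*,\ldots,x_{s-1}^*$ is a $\mathbf{G}(I)$-sequence. Then $H_1(x_1t,\ldots,x_it;\mathbf{R}(I))_n=0$ for all $n\geq 2$ and all $i=1,\ldots,s$.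
   Context: $\mathbf{R}(I)=\bigoplus_{n\geq0}I^nt^n$ is the Rees algebra, $\mathbf{G}(I)=\bigoplus_{n\geq0}I^n/I^{n+1}$ the associated graded ring, and $x_i^*$ the class of $x_i$ in $I/I^2$; $I^0=R$. For degree-one elements $z_1,\ldots,z_m$ of $U=\mathbf{R}(I)$, $H_1(z_1,\ldots,z_m;U)_n$ is the first homology of the degree-$n$ strand of the Koszul complex $\wedge_2(R^m)\otimes U_{n-2}\to\wedge_1(R^m)\otimes U_{n-1}\to U_n$, with differentials $e_i\wedge e_j\otimes u\mapsto e_j\otimes z_iu-e_i\otimes z_ju$ and $e_i\otimes v\mapsto z_iv$. *)

theory Defs
  imports Main
begin

definition is_ideal :: "'a::comm_ring_1 set \<Rightarrow> bool" where
  "is_ideal K \<longleftrightarrow> 0 \<in> K \<and> (\<forall>a\<in>K. \<forall>b\<in>K. a + b \<in> K) \<and> (\<forall>r. \<forall>a\<in>K. r * a \<in> K)"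

definition ideal_gen :: "'a::comm_ring_1 set \<Rightarrow> 'a set" where
  "ideal_gen S = \<Inter>{K. is_ideal K \<and> S \<subseteq> K}"

definition ideal_mult :: "'a::comm_ring_1 set \<Rightarrow> 'a set \<Rightarrow> 'a set" where
  "ideal_mult A B = ideal_gen {a * b | a b. a \<in> A \<and> b \<in> B}"

primrec ideal_pow :: "'a::comm_ring_1 set \<Rightarrow> nat \<Rightarrow> 'a set" where
  "ideal_pow I 0 = UNIV"
| "ideal_pow I (Suc n) = ideal_mult I (ideal_pow I n)"

definition colon_ideal :: "'a::comm_ring_1 set \<Rightarrow> 'a \<Rightarrow> 'a set" where
  "colon_ideal K x = {r. r * x \<in> K}"

definition maximal_ideal :: "'a::comm_ring_1 set \<Rightarrow> bool" where
  "maximal_ideal M \<longleftrightarrow> is_ideal M \<and> M \<noteq> UNIV \<and>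
     (\<forall>K. is_ideal K \<and> M \<subseteq> K \<longrightarrow> K = M \<or> K = UNIV)"

definition local_ring :: "'a::comm_ring_1 itself \<Rightarrow> bool" where
  "local_ring _ \<longleftrightarrow> (\<exists>!M::'a set. maximal_ideal M)"

definition noetherian_ring :: "'a::comm_ring_1 itself \<Rightarrow> bool" where
  "noetherian_ring _ \<longleftrightarrow> (\<forall>K::'a set. is_ideal K \<longrightarrow> (\<exists>S. finite S \<and> K = ideal_gen S))"

definition minimal_gens :: "(nat \<Rightarrow> 'a::comm_ring_1) \<Rightarrow> nat \<Rightarrow> 'a set \<Rightarrow> bool" where
  "minimal_gens x s J \<longleftrightarrow> J = ideal_gen (x ` {1..s}) \<and>
     (\<forall>S. finite S \<and> J = ideal_gen S \<longrightarrow> s \<le> card S)"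

definition regular_seq :: "(nat \<Rightarrow> 'a::comm_ring_1) \<Rightarrow> nat \<Rightarrow> bool" where
  "regular_seq x s \<longleftrightarrow>
     (\<forall>i\<in>{1..s}. \<forall>r. r * x i \<in> ideal_gen (x ` {1..<i}) \<longrightarrow> r \<in> ideal_gen (x ` {1..<i})) \<and>
     (s > 0 \<longrightarrow> ideal_gen (x ` {1..s}) \<noteq> UNIV)"

text \<open>Vanishing of H_1(x_1 t, ..., x_i t; R(I))_n, n \<ge> 2. The degree-n strand of the Koszul
  complex is  \<wedge>_2(R^i) \<otimes> I^(n-2) t^(n-2) \<rightarrow> R^i \<otimes> I^(n-1) t^(n-1) \<rightarrow> I^n t^n; we identify
  a t^k with a. A 1-cycle is v = (v_1..v_i), v_l \<in> I^(n-1), with sum x_l v_l = 0; a boundary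
  is the image of sum_{j<k} e_j\<wedge>e_k \<otimes> u_jk (u_jk \<in> I^(n-2)), whose l-th component is
  sum_{j<l} x_j u_jl - sum_{k>l} x_k u_lk.\<close>
definition koszul_H1_zero ::
  "'a::comm_ring_1 set \<Rightarrow> (nat \<Rightarrow> 'a) \<Rightarrow> nat \<Rightarrow> nat \<Rightarrow> bool" where
  "koszul_H1_zero I x i n \<longleftrightarrow>
     (\<forall>v. (\<forall>l\<in>{1..i}. v l \<in> ideal_pow I (n - 1)) \<and> (\<Sum>l\<in>{1..i}. x l * v l) = 0 \<longrightarrow>
        (\<exists>u. (\<forall>j\<in>{1..i}. \<forall>k\<in>{1..i}. j < k \<longrightarrow> u j k \<in> ideal_pow I (n - 2)) \<and>
             (\<forall>l\<in>{1..i}. v l = (\<Sum>j\<in>{1..<l}. x j * u j l) - (\<Sum>k\<in>{l<..i}. x k * u l k))))"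

text \<open>The associated graded ring G(I) = \<oplus> I^n/I^(n+1), via representatives:
  a representative is f with f n \<in> I^n and finite support; two representatives
  are equal in G(I) iff f n - g n \<in> I^(n+1) for all n.\<close>
definition gr_rep :: "'a::comm_ring_1 set \<Rightarrow> (nat \<Rightarrow> 'a) \<Rightarrow> bool" where
  "gr_rep I f \<longleftrightarrow> (\<forall>n. f n \<in> ideal_pow I n) \<and> finite {n. f n \<noteq> 0}"

definition gr_eq :: "'a::comm_ring_1 set \<Rightarrow> (nat \<Rightarrow> 'a) \<Rightarrow> (nat \<Rightarrow> 'a) \<Rightarrow> bool" where
  "gr_eq I f g \<longleftrightarrow> (\<forall>n. f n - g n \<in> ideal_pow I (Suc n))"

definition gr_mul :: "(nat \<Rightarrow> 'a::comm_ring_1) \<Rightarrow> (nat \<Rightarrow> 'a) \<Rightarrow> nat \<Rightarrow> 'a" where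
  "gr_mul f g = (\<lambda>n. \<Sum>k\<le>n. f k * g (n - k))"

text \<open>x^*: the class of x in I/I^2 (homogeneous of degree one).\<close>
definition gr_star :: "'a::comm_ring_1 \<Rightarrow> nat \<Rightarrow> 'a" where
  "gr_star a = (\<lambda>n. if n = 1 then a else 0)"

definition gr_one :: "nat \<Rightarrow> 'a::comm_ring_1" where
  "gr_one = (\<lambda>n. if n = 0 then 1 else 0)"

definition gr_ideal :: "'a::comm_ring_1 set \<Rightarrow> (nat \<Rightarrow> 'a) \<Rightarrow> nat \<Rightarrow> (nat \<Rightarrow> 'a) set" where
  "gr_ideal I y k = {h. gr_rep I h \<and>
     (\<exists>g. (\<forall>j\<in>{1..k}. gr_rep I (g j)) \<and>
          gr_eq I h (\<lambda>n. \<Sum>j\<in>{1..k}. gr_mul (gr_star (y j)) (g j) n))}"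

definition gr_regular_seq :: "'a::comm_ring_1 set \<Rightarrow> (nat \<Rightarrow> 'a) \<Rightarrow> nat \<Rightarrow> bool" where
  "gr_regular_seq I y k \<longleftrightarrow>
     (\<forall>i\<in>{1..k}. \<forall>g. gr_rep I g \<and> gr_mul (gr_star (y i)) g \<in> gr_ideal I y (i - 1)
         \<longrightarrow> g \<in> gr_ideal I y (i - 1)) \<and>
     (k > 0 \<longrightarrow> gr_one \<notin> gr_ideal I y k)"

end

theory Submission
  imports Defs
begin

text \<open>A 1-cycle of the degree-n strand of the Koszul complex on x_1 t, ..., x_i t has its
  last component in (J_(i-1) I^(n-1) : x_i) \<inter> I^(n-1); when that lies in J_(i-1) I^(n-2),
  subtracting a boundary kills the last component and leaves a cycle on x_1 t, ..., x_(i-1) t.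
  Conversely an element of the colon yields a cycle whose last component can only be a
  boundary if it lies in J_(i-1) I^(n-2).
  Under the regularity hypotheses, r x_i \<in> J_(i-1) forces r \<in> J_(i-1), and the
  Valabrega-Valla equality J_k \<inter> I^m = J_k I^(m-1) for a G(I)-regular x_1^*, ..., x_k^* puts r
  into J_(i-1) I^(n-2). That equality is proved by writing a \<in> J_k \<inter> I^m as c + x_k b with
  c \<in> J_(k-1) and pushing b one I-adic degree deeper at a time; each step is the regularity
  of x_k^* modulo x_1^*, ..., x_(k-1)^*.\<close>

lemma ideal_zero: "is_ideal K \<Longrightarrow> 0 \<in> K"
  unfolding is_ideal_def by auto

lemma ideal_add: "is_ideal K \<Longrightarrow> a \<in> K \<Longrightarrow> b \<in> K \<Longrightarrow> a + b \<in> K"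
  unfolding is_ideal_def by auto

lemma ideal_mult_left: "is_ideal K \<Longrightarrow> a \<in> K \<Longrightarrow> r * a \<in> K"
  unfolding is_ideal_def by auto

lemma ideal_mult_right: "is_ideal K \<Longrightarrow> a \<in> K \<Longrightarrow> a * r \<in> K"
  unfolding is_ideal_def by (metis mult.commute)

lemma ideal_uminus: "is_ideal K \<Longrightarrow> a \<in> K \<Longrightarrow> - a \<in> K"
  using ideal_mult_left[of K a "-1"] by simp

lemma ideal_diff: "is_ideal K \<Longrightarrow> a \<in> K \<Longrightarrow> b \<in> K \<Longrightarrow> a - b \<in> K"
  using ideal_add[of K a "- b"] ideal_uminus[of K b] by simp

lemma ideal_sum: "is_ideal K \<Longrightarrow> (\<And>j. j \<in> A \<Longrightarrow> f j \<in> K) \<Longrightarrow> sum f A \<in> K"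
  by (induction A rule: infinite_finite_induct) (simp_all add: ideal_zero ideal_add)

lemma is_ideal_UNIV: "is_ideal UNIV"
  unfolding is_ideal_def by simp

lemma is_ideal_ideal_gen: "is_ideal (ideal_gen S)"
  unfolding ideal_gen_def is_ideal_def by auto

lemma ideal_gen_subset: "S \<subseteq> ideal_gen S"
  unfolding ideal_gen_def by auto

lemma ideal_gen_least: "is_ideal K \<Longrightarrow> S \<subseteq> K \<Longrightarrow> ideal_gen S \<subseteq> K"
  unfolding ideal_gen_def by auto

lemma ideal_gen_mono: "S \<subseteq> T \<Longrightarrow> ideal_gen S \<subseteq> ideal_gen T"
  unfolding ideal_gen_def by auto

text \<open>\<open>lin_combs y A K\<close> is the product ideal (y_j : j \<in> A) K, described by its elements.\<close>

definition lin_combs :: "(nat \<Rightarrow> 'a::comm_ring_1) \<Rightarrow> nat set \<Rightarrow> 'a set \<Rightarrow> 'a set" where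
  "lin_combs y A K = {t. \<exists>c. (\<forall>j\<in>A. c j \<in> K) \<and> t = (\<Sum>j\<in>A. y j * c j)}"

lemma lin_combs_memI: "(\<And>j. j \<in> A \<Longrightarrow> c j \<in> K) \<Longrightarrow> (\<Sum>j\<in>A. y j * c j) \<in> lin_combs y A K"
  unfolding lin_combs_def by blast

lemma lin_combs_memE:
  assumes "t \<in> lin_combs y A K"
  obtains c where "\<forall>j\<in>A. c j \<in> K" "t = (\<Sum>j\<in>A. y j * c j)"
  using assms unfolding lin_combs_def by blast

lemma lin_combs_mono: "K \<subseteq> L \<Longrightarrow> lin_combs y A K \<subseteq> lin_combs y A L"
  unfolding lin_combs_def by blast

lemma lin_combs_empty: "lin_combs y {} K = {0}"
  unfolding lin_combs_def by auto

lemma is_ideal_lin_combs: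
  assumes K: "is_ideal K"
  shows "is_ideal (lin_combs y A K)"
  unfolding is_ideal_def
proof (intro conjI ballI allI)
  show "0 \<in> lin_combs y A K"
    using lin_combs_memI[of A "\<lambda>_. 0" K y] ideal_zero[OF K] by simp
next
  fix a b assume "a \<in> lin_combs y A K" "b \<in> lin_combs y A K"
  then obtain c d where "\<forall>j\<in>A. c j \<in> K" "a = (\<Sum>j\<in>A. y j * c j)"
    and "\<forall>j\<in>A. d j \<in> K" "b = (\<Sum>j\<in>A. y j * d j)"
    by (auto elim!: lin_combs_memE)
  then show "a + b \<in> lin_combs y A K"
    using lin_combs_memI[of A "\<lambda>j. c j + d j" K y] K
    by (simp add: ideal_add sum.distrib distrib_left)
next
  fix r a assume "a \<in> lin_combs y A K"
  then obtain c where "\<forall>j\<in>A. c j \<in> K" "a = (\<Sum>j\<in>A. y j * c j)"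
    by (auto elim!: lin_combs_memE)
  then show "r * a \<in> lin_combs y A K"
    using lin_combs_memI[of A "\<lambda>j. r * c j" K y] K
    by (simp add: ideal_mult_left sum_distrib_left mult.left_commute)
qed

lemma lin_combs_Suc:
  "t \<in> lin_combs y {1..Suc k} K \<longleftrightarrow>
     (\<exists>c b. c \<in> lin_combs y {1..k} K \<and> b \<in> K \<and> t = c + y (Suc k) * b)"
proof
  assume "t \<in> lin_combs y {1..Suc k} K"
  then obtain c where c: "\<forall>j\<in>{1..Suc k}. c j \<in> K" "t = (\<Sum>j\<in>{1..Suc k}. y j * c j)"
    by (rule lin_combs_memE)
  have "(\<Sum>j\<in>{1..k}. y j * c j) \<in> lin_combs y {1..k} K"
    using c(1) by (intro lin_combs_memI) auto
  moreover have "t = (\<Sum>j\<in>{1..k}. y j * c j) + y (Suc k) * c (Suc k)"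
    using c(2) by (simp add: add.commute)
  moreover have "c (Suc k) \<in> K"
    using c(1) by simp
  ultimately show "\<exists>c b. c \<in> lin_combs y {1..k} K \<and> b \<in> K \<and> t = c + y (Suc k) * b"
    by blast
next
  assume "\<exists>c b. c \<in> lin_combs y {1..k} K \<and> b \<in> K \<and> t = c + y (Suc k) * b"
  then obtain c b cc where b: "b \<in> K" and t: "t = c + y (Suc k) * b"
    and cc: "\<forall>j\<in>{1..k}. cc j \<in> K" "c = (\<Sum>j\<in>{1..k}. y j * cc j)"
    by (auto elim!: lin_combs_memE)
  have "t = (\<Sum>j\<in>{1..Suc k}. y j * (cc(Suc k := b)) j)"
    using t cc(2) by (simp add: add.commute)
  then show "t \<in> lin_combs y {1..Suc k} K"
    using b cc(1) lin_combs_memI[of "{1..Suc k}" "cc(Suc k := b)" K y] by auto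
qed

lemma ideal_gen_eq_lin_combs:
  assumes "finite A"
  shows "ideal_gen (y ` A) = lin_combs y A UNIV"
proof
  show "ideal_gen (y ` A) \<subseteq> lin_combs y A UNIV"
  proof (rule ideal_gen_least[OF is_ideal_lin_combs[OF is_ideal_UNIV]], clarify)
    fix i assume i: "i \<in> A"
    have "(\<Sum>j\<in>A. y j * (if j = i then 1 else 0)) = y i"
      using assms i by (simp add: if_distrib sum.delta cong: if_cong)
    then show "y i \<in> lin_combs y A UNIV"
      using lin_combs_memI[of A "\<lambda>j. if j = i then 1 else 0" UNIV y] by simp
  qed
  show "lin_combs y A UNIV \<subseteq> ideal_gen (y ` A)"
  proof (clarsimp elim!: lin_combs_memE)
    fix c
    show "(\<Sum>j\<in>A. y j * c j) \<in> ideal_gen (y ` A)"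
      using ideal_gen_subset[of "y ` A"]
      by (intro ideal_sum[OF is_ideal_ideal_gen] ideal_mult_right[OF is_ideal_ideal_gen]) auto
  qed
qed

lemma ideal_mult_ideal_gen_eq_lin_combs:
  assumes A: "finite A" and K: "is_ideal K"
  shows "ideal_mult (ideal_gen (y ` A)) K = lin_combs y A K"
proof
  show "ideal_mult (ideal_gen (y ` A)) K \<subseteq> lin_combs y A K"
    unfolding ideal_mult_def
  proof (rule ideal_gen_least[OF is_ideal_lin_combs[OF K]], clarify)
    fix a b assume a: "a \<in> ideal_gen (y ` A)" and b: "b \<in> K"
    obtain c where "a = (\<Sum>j\<in>A. y j * c j)"
      using a unfolding ideal_gen_eq_lin_combs[OF A] by (rule lin_combs_memE)
    then have "a * b = (\<Sum>j\<in>A. y j * (c j * b))"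
      by (simp add: sum_distrib_right mult.assoc)
    then show "a * b \<in> lin_combs y A K"
      using lin_combs_memI[of A "\<lambda>j. c j * b" K y] ideal_mult_left[OF K b] by simp
  qed
  show "lin_combs y A K \<subseteq> ideal_mult (ideal_gen (y ` A)) K"
  proof (clarsimp elim!: lin_combs_memE)
    fix c assume c: "\<forall>j\<in>A. c j \<in> K"
    have "y j * c j \<in> ideal_mult (ideal_gen (y ` A)) K" if "j \<in> A" for j
      using that c ideal_gen_subset[of "y ` A"]
        ideal_gen_subset[of "{a * b |a b. a \<in> ideal_gen (y ` A) \<and> b \<in> K}"]
      unfolding ideal_mult_def by blast
    then show "(\<Sum>j\<in>A. y j * c j) \<in> ideal_mult (ideal_gen (y ` A)) K"
      unfolding ideal_mult_def by (rule ideal_sum[OF is_ideal_ideal_gen])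
  qed
qed

lemma is_ideal_ideal_pow: "is_ideal (ideal_pow I p)"
  by (cases p) (simp_all add: ideal_mult_def is_ideal_ideal_gen is_ideal_UNIV)

lemma mult_mem_ideal_pow_Suc: "a \<in> I \<Longrightarrow> b \<in> ideal_pow I p \<Longrightarrow> a * b \<in> ideal_pow I (Suc p)"
  using ideal_gen_subset[of "{a * b |a b. a \<in> I \<and> b \<in> ideal_pow I p}"]
  by (auto simp: ideal_mult_def)

lemma ideal_pow_Suc_subset: "ideal_pow I (Suc p) \<subseteq> ideal_pow I p"
proof (induction p)
  case (Suc p)
  then show ?case
    unfolding ideal_pow.simps(2)[of I "Suc p"] ideal_pow.simps(2)[of I p] ideal_mult_def
    by (intro ideal_gen_mono) blast
qed simp

lemma ideal_pow_antimonoD: "a \<in> ideal_pow I q \<Longrightarrow> p \<le> q \<Longrightarrow> a \<in> ideal_pow I p"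
  by (induction q) (use ideal_pow_Suc_subset le_Suc_eq in blast)+

lemma koszul_H1_zero_imp_colon:
  assumes H: "koszul_H1_zero I x i n" and i: "1 \<le> i"
    and r: "r \<in> ideal_pow I (n - 1)"
    and rx: "r * x i \<in> lin_combs x {1..<i} (ideal_pow I (n - 1))"
  shows "r \<in> lin_combs x {1..<i} (ideal_pow I (n - 2))"
proof -
  obtain a where a: "\<forall>j\<in>{1..<i}. a j \<in> ideal_pow I (n - 1)"
    "r * x i = (\<Sum>j\<in>{1..<i}. x j * a j)"
    using rx by (rule lin_combs_memE)
  define v where "v = (\<lambda>l. if l = i then r else - a l)"
  have split_i: "{1..i} = insert i {1..<i}"
    using i by auto
  have v_mem: "\<forall>l\<in>{1..i}. v l \<in> ideal_pow I (n - 1)"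
    using a(1) r unfolding v_def by (auto intro!: ideal_uminus[OF is_ideal_ideal_pow])
  have "(\<Sum>l\<in>{1..i}. x l * v l) = x i * r - (\<Sum>l\<in>{1..<i}. x l * a l)"
    unfolding split_i by (simp add: v_def sum_negf)
  then have v_cycle: "(\<Sum>l\<in>{1..i}. x l * v l) = 0"
    using a(2) by (simp add: mult.commute)
  obtain u where u: "\<forall>j\<in>{1..i}. \<forall>k\<in>{1..i}. j < k \<longrightarrow> u j k \<in> ideal_pow I (n - 2)"
    "\<forall>l\<in>{1..i}. v l = (\<Sum>j\<in>{1..<l}. x j * u j l) - (\<Sum>k\<in>{l<..i}. x k * u l k)"
    using H v_mem v_cycle unfolding koszul_H1_zero_def by blast
  have "v i = (\<Sum>j\<in>{1..<i}. x j * u j i) - (\<Sum>k\<in>{i<..i}. x k * u i k)"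
    using u(2) i by simp
  then have "r = (\<Sum>j\<in>{1..<i}. x j * u j i)"
    by (simp add: v_def)
  then show ?thesis
    using u(1) i lin_combs_memI[of "{1..<i}" "\<lambda>j. u j i" "ideal_pow I (n - 2)" x] by simp
qed

lemma koszul_boundary_Suc:
  fixes x :: "nat \<Rightarrow> 'a::comm_ring_1"
  assumes u_mem: "\<forall>j\<in>{1..i}. \<forall>k\<in>{1..i}. j < k \<longrightarrow> u j k \<in> K"
    and u: "\<forall>l\<in>{1..i}. v l + x (Suc i) * w l =
      (\<Sum>j\<in>{1..<l}. x j * u j l) - (\<Sum>k\<in>{l<..i}. x k * u l k)"
    and w_mem: "\<forall>l\<in>{1..i}. w l \<in> K"
    and w: "v (Suc i) = (\<Sum>l\<in>{1..i}. x l * w l)"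
  shows "\<exists>u'. (\<forall>j\<in>{1..Suc i}. \<forall>k\<in>{1..Suc i}. j < k \<longrightarrow> u' j k \<in> K) \<and>
    (\<forall>l\<in>{1..Suc i}. v l = (\<Sum>j\<in>{1..<l}. x j * u' j l) - (\<Sum>k\<in>{l<..Suc i}. x k * u' l k))"
proof (intro exI[of _ "\<lambda>j k. if k = Suc i then w j else u j k"] conjI ballI impI)
  fix j k assume "j \<in> {1..Suc i}" "k \<in> {1..Suc i}" "j < k"
  then show "(if k = Suc i then w j else u j k) \<in> K"
    using u_mem w_mem by auto
next
  fix l assume l: "l \<in> {1..Suc i}"
  let ?u' = "\<lambda>j k. if k = Suc i then w j else u j k"
  show "v l = (\<Sum>j\<in>{1..<l}. x j * ?u' j l) - (\<Sum>k\<in>{l<..Suc i}. x k * ?u' l k)"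
  proof (cases "l = Suc i")
    case True
    then show ?thesis
      using w by (simp add: atLeastLessThanSuc_atLeastAtMost)
  next
    case False
    then have l: "l \<in> {1..i}"
      using l by auto
    have "(\<Sum>j\<in>{1..<l}. x j * ?u' j l) = (\<Sum>j\<in>{1..<l}. x j * u j l)"
      using False by simp
    moreover have "{l<..Suc i} = insert (Suc i) {l<..i}"
      using l by auto
    then have "(\<Sum>k\<in>{l<..Suc i}. x k * ?u' l k) = x (Suc i) * w l + (\<Sum>k\<in>{l<..i}. x k * u l k)"
      by simp
    ultimately show ?thesis
      using u l by (simp add: algebra_simps)
  qed
qed

lemma koszul_H1_zero_Suc:
  assumes H: "koszul_H1_zero I x i n" and n: "2 \<le> n" and xI: "x (Suc i) \<in> I"
    and colon: "\<And>r. r \<in> ideal_pow I (n - 1) \<Longrightarrow>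
      r * x (Suc i) \<in> lin_combs x {1..i} (ideal_pow I (n - 1)) \<Longrightarrow>
      r \<in> lin_combs x {1..i} (ideal_pow I (n - 2))"
  shows "koszul_H1_zero I x (Suc i) n"
  unfolding koszul_H1_zero_def
proof (intro allI impI, elim conjE)
  fix v assume v_mem: "\<forall>l\<in>{1..Suc i}. v l \<in> ideal_pow I (n - 1)"
    and v_cycle: "(\<Sum>l\<in>{1..Suc i}. x l * v l) = 0"
  have last: "x (Suc i) * v (Suc i) + (\<Sum>l\<in>{1..i}. x l * v l) = 0"
    using v_cycle by (simp add: add.commute)
  then have "v (Suc i) * x (Suc i) = (\<Sum>l\<in>{1..i}. x l * - v l)"
    by (simp add: sum_negf mult.commute eq_neg_iff_add_eq_0)
  then have "v (Suc i) * x (Suc i) \<in> lin_combs x {1..i} (ideal_pow I (n - 1))"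
    using v_mem lin_combs_memI[of "{1..i}" "\<lambda>l. - v l" "ideal_pow I (n - 1)" x]
    by (simp add: ideal_uminus[OF is_ideal_ideal_pow])
  then have "v (Suc i) \<in> lin_combs x {1..i} (ideal_pow I (n - 2))"
    using colon v_mem by simp
  then obtain w where w: "\<forall>l\<in>{1..i}. w l \<in> ideal_pow I (n - 2)"
    "v (Suc i) = (\<Sum>l\<in>{1..i}. x l * w l)"
    by (rule lin_combs_memE)
  define v' where "v' = (\<lambda>l. v l + x (Suc i) * w l)"
  have "x (Suc i) * w l \<in> ideal_pow I (n - 1)" if "l \<in> {1..i}" for l
    using mult_mem_ideal_pow_Suc[OF xI, of "w l" "n - 2"] w(1) that n
    by (simp add: Suc_diff_Suc numeral_2_eq_2)
  then have v'_mem: "\<forall>l\<in>{1..i}. v' l \<in> ideal_pow I (n - 1)"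
    unfolding v'_def using v_mem by (auto intro!: ideal_add[OF is_ideal_ideal_pow])
  have "(\<Sum>l\<in>{1..i}. x l * v' l) = (\<Sum>l\<in>{1..i}. x l * v l) + x (Suc i) * v (Suc i)"
    unfolding v'_def w(2)
    by (simp add: distrib_left sum.distrib sum_distrib_left mult.left_commute)
  then have v'_cycle: "(\<Sum>l\<in>{1..i}. x l * v' l) = 0"
    using last by (simp add: add.commute)
  obtain u where u: "\<forall>j\<in>{1..i}. \<forall>k\<in>{1..i}. j < k \<longrightarrow> u j k \<in> ideal_pow I (n - 2)"
    "\<forall>l\<in>{1..i}. v' l = (\<Sum>j\<in>{1..<l}. x j * u j l) - (\<Sum>k\<in>{l<..i}. x k * u l k)"
    using H v'_mem v'_cycle unfolding koszul_H1_zero_def by blast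
  then show "\<exists>u. (\<forall>j\<in>{1..Suc i}. \<forall>k\<in>{1..Suc i}. j < k \<longrightarrow> u j k \<in> ideal_pow I (n - 2)) \<and>
      (\<forall>l\<in>{1..Suc i}. v l = (\<Sum>j\<in>{1..<l}. x j * u j l) - (\<Sum>k\<in>{l<..Suc i}. x k * u l k))"
    using koszul_boundary_Suc[of i u _ v x w] w unfolding v'_def by blast
qed

lemma koszul_H1_zero_iff_colon:
  assumes xI: "\<forall>l\<in>{1..s}. x l \<in> I" and n: "2 \<le> n"
  shows "(\<forall>i\<in>{1..s}. koszul_H1_zero I x i n) \<longleftrightarrow>
    (\<forall>i\<in>{1..s}. colon_ideal (lin_combs x {1..<i} (ideal_pow I (n - 1))) (x i) \<inter> ideal_pow I (n - 1)
        \<subseteq> lin_combs x {1..<i} (ideal_pow I (n - 2)))"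
proof
  assume "\<forall>i\<in>{1..s}. koszul_H1_zero I x i n"
  then show "\<forall>i\<in>{1..s}. colon_ideal (lin_combs x {1..<i} (ideal_pow I (n - 1))) (x i)
      \<inter> ideal_pow I (n - 1) \<subseteq> lin_combs x {1..<i} (ideal_pow I (n - 2))"
    using koszul_H1_zero_imp_colon[of I x _ n] by (auto simp: colon_ideal_def)
next
  assume colon: "\<forall>i\<in>{1..s}. colon_ideal (lin_combs x {1..<i} (ideal_pow I (n - 1))) (x i)
      \<inter> ideal_pow I (n - 1) \<subseteq> lin_combs x {1..<i} (ideal_pow I (n - 2))"
  have "i \<le> s \<Longrightarrow> koszul_H1_zero I x i n" for i
  proof (induction i)
    case 0
    then show ?case
      by (simp add: koszul_H1_zero_def)
  next
    case (Suc i)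
    show ?case
    proof (rule koszul_H1_zero_Suc[OF _ n])
      show "koszul_H1_zero I x i n" "x (Suc i) \<in> I"
        using Suc xI by auto
      show "r \<in> lin_combs x {1..i} (ideal_pow I (n - 2))"
        if "r \<in> ideal_pow I (n - 1)" "r * x (Suc i) \<in> lin_combs x {1..i} (ideal_pow I (n - 1))" for r
        using that bspec[OF colon, of "Suc i"] Suc.prems
        by (auto simp: colon_ideal_def atLeastLessThanSuc_atLeastAtMost)
    qed
  qed
  then show "\<forall>i\<in>{1..s}. koszul_H1_zero I x i n"
    by simp
qed

definition gr_single :: "nat \<Rightarrow> 'a::comm_ring_1 \<Rightarrow> nat \<Rightarrow> 'a" where
  "gr_single p b = (\<lambda>n. if n = p then b else 0)"

lemma gr_rep_single: "b \<in> ideal_pow I p \<Longrightarrow> gr_rep I (gr_single p b)"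
  unfolding gr_rep_def gr_single_def
  by (auto intro: ideal_zero[OF is_ideal_ideal_pow] finite_subset[of _ "{p}"])

lemma gr_mul_star: "gr_mul (gr_star a) g n = (if n = 0 then 0 else a * g (n - 1))"
proof -
  have "gr_mul (gr_star a) g n = (\<Sum>k\<le>n. if k = 1 then a * g (n - 1) else 0)"
    unfolding gr_mul_def gr_star_def by (intro sum.cong) auto
  then show ?thesis
    by (simp add: sum.delta)
qed

lemma gr_mul_star_single: "gr_mul (gr_star a) (gr_single p b) = gr_single (Suc p) (a * b)"
  by (rule ext) (auto simp: gr_mul_star gr_single_def)

lemma gr_single_mem_gr_ideal:
  assumes a: "a \<in> ideal_pow I (Suc p)" and c: "\<forall>j\<in>{1..k}. c j \<in> ideal_pow I p"
    and e: "a - (\<Sum>j\<in>{1..k}. y j * c j) \<in> ideal_pow I (Suc (Suc p))"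
  shows "gr_single (Suc p) a \<in> gr_ideal I y k"
  unfolding gr_ideal_def
proof (intro CollectI conjI exI[of _ "\<lambda>j. gr_single p (c j)"] ballI)
  show "gr_rep I (gr_single (Suc p) a)"
    using a by (rule gr_rep_single)
  show "gr_rep I (gr_single p (c j))" if "j \<in> {1..k}" for j
    using c that by (simp add: gr_rep_single)
  have "gr_single (Suc p) a n - (\<Sum>j\<in>{1..k}. gr_mul (gr_star (y j)) (gr_single p (c j)) n)
      \<in> ideal_pow I (Suc n)" for n
  proof (cases "n = Suc p")
    case True
    then show ?thesis
      unfolding gr_mul_star_single using e by (simp add: gr_single_def)
  next
    case False
    then show ?thesis
      unfolding gr_mul_star_single using ideal_zero[OF is_ideal_ideal_pow]
      by (simp add: gr_single_def del: ideal_pow.simps)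
  qed
  then show "gr_eq I (gr_single (Suc p) a)
      (\<lambda>n. \<Sum>j\<in>{1..k}. gr_mul (gr_star (y j)) (gr_single p (c j)) n)"
    unfolding gr_eq_def by blast
qed

lemma gr_single_mem_gr_idealD:
  assumes "gr_single p b \<in> gr_ideal I y k"
  shows "\<exists>d\<in>lin_combs y {1..k} (ideal_pow I (p - 1)). b - d \<in> ideal_pow I (Suc p)"
proof -
  obtain g where g: "\<forall>j\<in>{1..k}. gr_rep I (g j)"
    and eq: "gr_eq I (gr_single p b) (\<lambda>n. \<Sum>j\<in>{1..k}. gr_mul (gr_star (y j)) (g j) n)"
    using assms unfolding gr_ideal_def by blast
  define c where "c = (\<lambda>j. if p = 0 then 0 else g j (p - 1))"
  have "b - (\<Sum>j\<in>{1..k}. y j * c j) \<in> ideal_pow I (Suc p)"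
    using spec[OF eq[unfolded gr_eq_def], of p]
    by (cases "p = 0") (simp_all add: gr_single_def gr_mul_star c_def del: ideal_pow.simps)
  moreover have "\<forall>j\<in>{1..k}. c j \<in> ideal_pow I (p - 1)"
    using g by (simp add: c_def gr_rep_def)
  ultimately show ?thesis
    using lin_combs_memI[of "{1..k}" c "ideal_pow I (p - 1)" y] by blast
qed

text \<open>Regularity of x_(k+1)^* modulo x_1^*, ..., x_k^*, read in degree p + 1 of G(I).\<close>

lemma gr_regular_seq_degree_step:
  assumes G: "gr_regular_seq I y K" and k: "Suc k \<le> K" and yI: "y (Suc k) \<in> I"
    and b: "b \<in> ideal_pow I p" and c: "c \<in> lin_combs y {1..k} (ideal_pow I p)"
    and e: "y (Suc k) * b - c \<in> ideal_pow I (Suc (Suc p))"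
  shows "\<exists>d\<in>lin_combs y {1..k} (ideal_pow I (p - 1)). b - d \<in> ideal_pow I (Suc p)"
proof -
  obtain cc where cc: "\<forall>j\<in>{1..k}. cc j \<in> ideal_pow I p" "c = (\<Sum>j\<in>{1..k}. y j * cc j)"
    using c by (rule lin_combs_memE)
  have "gr_mul (gr_star (y (Suc k))) (gr_single p b) \<in> gr_ideal I y k"
    unfolding gr_mul_star_single
    using gr_single_mem_gr_ideal[OF mult_mem_ideal_pow_Suc[OF yI b] cc(1)] e cc(2) by simp
  then have "gr_single p b \<in> gr_ideal I y k"
    using G k gr_rep_single[OF b] unfolding gr_regular_seq_def
    by (metis atLeastAtMost_iff diff_Suc_1 le_add1 plus_1_eq_Suc)
  then show ?thesis
    by (rule gr_single_mem_gr_idealD)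
qed

lemma gr_regular_seq_approx:
  assumes G: "gr_regular_seq I x K" and k: "Suc k \<le> K" and xI: "x (Suc k) \<in> I"
    and IH: "\<And>m. 0 < m \<Longrightarrow>
      lin_combs x {1..k} UNIV \<inter> ideal_pow I m \<subseteq> lin_combs x {1..k} (ideal_pow I (m - 1))"
    and a: "a \<in> lin_combs x {1..Suc k} UNIV" "a \<in> ideal_pow I m" and p: "p < m"
  shows "\<exists>c b. c \<in> lin_combs x {1..k} UNIV \<and> b \<in> ideal_pow I p \<and> a = c + x (Suc k) * b"
  using p
proof (induction p)
  case 0
  then show ?case
    using a(1) lin_combs_Suc[of a x k UNIV] by simp
next
  case (Suc p)
  then obtain c b where c: "c \<in> lin_combs x {1..k} UNIV" and b: "b \<in> ideal_pow I p"
    and a_eq: "a = c + x (Suc k) * b"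
    by auto
  have xb: "x (Suc k) * b \<in> ideal_pow I (Suc p)"
    using xI b by (rule mult_mem_ideal_pow_Suc)
  have "c = a - x (Suc k) * b"
    using a_eq by simp
  then have "c \<in> ideal_pow I (Suc p)"
    using ideal_diff[OF is_ideal_ideal_pow ideal_pow_antimonoD[OF a(2)] xb] Suc.prems by simp
  then have "c \<in> lin_combs x {1..k} (ideal_pow I p)"
    using IH[of "Suc p"] c by auto
  then have "- c \<in> lin_combs x {1..k} (ideal_pow I p)"
    by (rule ideal_uminus[OF is_ideal_lin_combs[OF is_ideal_ideal_pow]])
  moreover have "x (Suc k) * b - - c \<in> ideal_pow I (Suc (Suc p))"
    using a_eq ideal_pow_antimonoD[OF a(2)] Suc.prems by (simp add: add.commute del: ideal_pow.simps)
  ultimately obtain d where d: "d \<in> lin_combs x {1..k} (ideal_pow I (p - 1))"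
    and bd: "b - d \<in> ideal_pow I (Suc p)"
    using gr_regular_seq_degree_step[OF G k xI b] by blast
  have "d \<in> lin_combs x {1..k} UNIV"
    using d lin_combs_mono[of "ideal_pow I (p - 1)" UNIV x] by blast
  then have "c + x (Suc k) * d \<in> lin_combs x {1..k} UNIV"
    using c is_ideal_lin_combs[OF is_ideal_UNIV] by (blast intro: ideal_add ideal_mult_left)
  moreover have "a = (c + x (Suc k) * d) + x (Suc k) * (b - d)"
    using a_eq by (simp add: algebra_simps)
  ultimately show ?case
    using bd by blast
qed

text \<open>Valabrega-Valla: the nontrivial inclusion of J_k \<inter> I^m = J_k I^(m-1) for a G(I)-regular
  x_1^*, ..., x_k^*.\<close>

lemma gr_regular_seq_inter_ideal_pow:
  assumes G: "gr_regular_seq I x K" and xI: "\<forall>l\<in>{1..K}. x l \<in> I"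
    and k: "k \<le> K" and m: "0 < m"
  shows "lin_combs x {1..k} UNIV \<inter> ideal_pow I m \<subseteq> lin_combs x {1..k} (ideal_pow I (m - 1))"
  using k m
proof (induction k arbitrary: m)
  case 0
  then show ?case
    by (simp add: lin_combs_empty)
next
  case (Suc k)
  have xI': "x (Suc k) \<in> I"
    using xI Suc.prems by simp
  show ?case
  proof clarify
    fix a assume a: "a \<in> lin_combs x {1..Suc k} UNIV" "a \<in> ideal_pow I m"
    obtain c b where c: "c \<in> lin_combs x {1..k} UNIV" and b: "b \<in> ideal_pow I (m - 1)"
      and a_eq: "a = c + x (Suc k) * b"
      using gr_regular_seq_approx[OF G Suc.prems(1) xI' _ a, of "m - 1"] Suc by auto
    have "x (Suc k) * b \<in> ideal_pow I m"
      using mult_mem_ideal_pow_Suc[OF xI' b] Suc.prems by simp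
    then have "c \<in> ideal_pow I m"
      using ideal_diff[OF is_ideal_ideal_pow a(2)] a_eq by (metis add_diff_cancel_right')
    then have "c \<in> lin_combs x {1..k} (ideal_pow I (m - 1))"
      using Suc c by auto
    then show "a \<in> lin_combs x {1..Suc k} (ideal_pow I (m - 1))"
      using lin_combs_Suc a_eq b by blast
  qed
qed

lemma regular_seq_colon:
  assumes R: "regular_seq x s" and G: "gr_regular_seq I x (s - 1)"
    and xI: "\<forall>l\<in>{1..s}. x l \<in> I" and i: "i \<in> {1..s}" and n: "2 \<le> n"
  shows "colon_ideal (lin_combs x {1..<i} (ideal_pow I (n - 1))) (x i) \<inter> ideal_pow I (n - 1)
    \<subseteq> lin_combs x {1..<i} (ideal_pow I (n - 2))"
proof clarify
  fix r assume r: "r \<in> colon_ideal (lin_combs x {1..<i} (ideal_pow I (n - 1))) (x i)"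
    and r_pow: "r \<in> ideal_pow I (n - 1)"
  have J: "{1..<i} = {1..i - 1}"
    using i by auto
  have "r * x i \<in> ideal_gen (x ` {1..<i})"
    using r lin_combs_mono[of "ideal_pow I (n - 1)" UNIV x]
    unfolding colon_ideal_def ideal_gen_eq_lin_combs[OF finite_atLeastLessThan] by blast
  then have "r \<in> ideal_gen (x ` {1..<i})"
    using R i unfolding regular_seq_def by blast
  then have "r \<in> lin_combs x {1..i - 1} UNIV"
    using ideal_gen_eq_lin_combs[of "{1..<i}" x] J by simp
  moreover have "\<forall>l\<in>{1..s - 1}. x l \<in> I"
    using xI by auto
  ultimately have "r \<in> lin_combs x {1..i - 1} (ideal_pow I (n - 1 - 1))"
    using gr_regular_seq_inter_ideal_pow[OF G, of "i - 1" "n - 1"] i n r_pow by force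
  then show "r \<in> lin_combs x {1..<i} (ideal_pow I (n - 2))"
    unfolding J by (simp add: numeral_2_eq_2)
qed

theorem lemma3p3:
  fixes I J :: "'a::comm_ring_1 set" and x :: "nat \<Rightarrow> 'a" and s :: nat
  assumes "noetherian_ring TYPE('a)" and "local_ring TYPE('a)"
    and "is_ideal I" and "is_ideal J" and "J \<subseteq> I"
    and "minimal_gens x s J"
  shows "(\<forall>n\<ge>2. (\<forall>i\<in>{1..s}. koszul_H1_zero I x i n) \<longleftrightarrow>
             (\<forall>i\<in>{1..s}. colon_ideal (ideal_mult (ideal_gen (x ` {1..<i})) (ideal_pow I (n - 1))) (x i)
                            \<inter> ideal_pow I (n - 1)
                          \<subseteq> ideal_mult (ideal_gen (x ` {1..<i})) (ideal_pow I (n - 2))))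
       \<and> (regular_seq x s \<and> gr_regular_seq I x (s - 1) \<longrightarrow>
            (\<forall>n\<ge>2. \<forall>i\<in>{1..s}. koszul_H1_zero I x i n))"
proof -
  have xI: "\<forall>l\<in>{1..s}. x l \<in> I"
    using assms(5,6) ideal_gen_subset[of "x ` {1..s}"] unfolding minimal_gens_def by auto
  have J_mult: "ideal_mult (ideal_gen (x ` {1..<i})) (ideal_pow I q) = lin_combs x {1..<i} (ideal_pow I q)"
    for i q
    by (simp add: ideal_mult_ideal_gen_eq_lin_combs is_ideal_ideal_pow)
  show ?thesis
    unfolding J_mult
    using koszul_H1_zero_iff_colon[OF xI] regular_seq_colon[OF _ _ xI] by blast
qed

end
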